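(* Let $\mathbf B=(\mathbf b_1,\dots,\mathbf b_n)\in\mathbb Q^{d\times n}$ be a basis of a lattice $\mathcal{L}$, let $k\in[n]$ and $\alpha>\sqrt n$ be such that $\|\tilde{\mathbf b}_i\|\le\|\tilde{\mathbf b}_j\|/\alpha$ for all $i\le k<j$. If $\mathcal{L}'\subseteq\mathcal{L}$ is a sublattice of rank $\ell\le k$ with \[ \det(\mathcal{L}')<\frac{\alpha}{\sqrt n}\cdot\min_{S\subseteq[n],\,|S|=\ell}\ \prod_{i\in S}\|\tilde{\mathbf b}_i\|, \] then $\mathcal{L}'\subseteq\mathcal{L}(\mathbf b_1,\dots,\mathbf b_k)$.
   Context: Gram–Schmidt orthogonalization: $\tilde{\mathbf b}_1=\mathbf b_1$, $\tilde{\mathbf b}_i=\Pi_{\{\mathbf b_1,\dots,\mathbf b_{i-1}\}^\perp}(\mathbf b_i)$, where $\Pi_{S^\perp}$ is orthogonal projection onto the orthogonal complement of $\mathrm{span}(S)$. $\mathcal{L}(\mathbf v_1,\dots,\mathbf v_k)$ denotes the lattice generated by the vectors. *)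

theory Defs
  imports "HOL-Analysis.Analysis"
begin

text \<open>Vectors are indexed from 0: the paper's b_1..b_n are b 0 .. b (n-1).\<close>

definition lattice_gen :: "(nat \<Rightarrow> 'a::real_vector) \<Rightarrow> nat \<Rightarrow> 'a set" where
  "lattice_gen v m = {x. \<exists>z::nat \<Rightarrow> int. x = (\<Sum>i<m. of_int (z i) *\<^sub>R v i)}"

definition lin_indep_family :: "(nat \<Rightarrow> 'a::real_vector) \<Rightarrow> nat \<Rightarrow> bool" where
  "lin_indep_family v m \<longleftrightarrow> inj_on v {..<m} \<and> independent (v ` {..<m})"

definition gso :: "(nat \<Rightarrow> 'a::real_inner) \<Rightarrow> nat \<Rightarrow> 'a" where
  "gso b i = (THE y. b i - y \<in> span (b ` {..<i}) \<and> (\<forall>x\<in>span (b ` {..<i}). inner y x = 0))"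

definition gram_det :: "(nat \<Rightarrow> 'a::real_inner) \<Rightarrow> nat \<Rightarrow> real" where
  "gram_det v m = (\<Sum>p | p permutes {..<m}. of_int (sign p) * (\<Prod>i<m. inner (v i) (v (p i))))"

definition lattice_det :: "(nat \<Rightarrow> 'a::real_inner) \<Rightarrow> nat \<Rightarrow> real" where
  "lattice_det v m = sqrt (gram_det v m)"

end

theory Submission
  imports Defs "Jordan_Normal_Form.Determinant"
begin

text \<open>Write the generators c_j of L' in the basis b and reduce them from the last basis
  vector downwards: whenever several c_j involve b_m, a Euclidean algorithm on their integer
  coefficients (elementary integer column operations, which preserve the Gram determinant)
  leaves a single generator involving b_m, whose Gram-Schmidt component orthogonal to the
  others is an integer multiple of gso b m plus a vector of span(b_0..b_{m-1}), hence at least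
  as long as gso b m. The result is a set P of pivot indices with |P| = l and
  det(L')^2 \<ge> \<Prod>_{i\<in>P} |gso b i|^2, and if L' is not contained in L(b_0..b_{k-1}),
  some pivot p is \<ge> k. Exchanging p for an index i < k outside P divides the product by
  at least \<alpha>, contradicting the determinant bound (the factor sqrt n \<ge> 1 is slack).\<close>

definition gram_mat :: "(nat \<Rightarrow> 'a::real_inner) \<Rightarrow> nat \<Rightarrow> real mat" where
  "gram_mat v m = mat m m (\<lambda>(i,j). inner (v i) (v j))"

lemma gram_mat_carrier [simp]: "gram_mat v m \<in> carrier_mat m m"
  unfolding gram_mat_def by simp

lemma gram_mat_index [simp]:
  "i < m \<Longrightarrow> j < m \<Longrightarrow> gram_mat v m $$ (i,j) = inner (v i) (v j)"
  "dim_row (gram_mat v m) = m" "dim_col (gram_mat v m) = m"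
  unfolding gram_mat_def by auto

lemma gram_det_eq_det_gram_mat: "gram_det v m = Determinant.det (gram_mat v m)"
proof -
  have "Determinant.det (gram_mat v m) =
      (\<Sum>p | p permutes {..<m}. of_int (sign p) * (\<Prod>i<m. gram_mat v m $$ (i,p i)))"
    using det_def'[OF gram_mat_carrier] by (simp add: atLeast0LessThan)
  also have "\<dots> = gram_det v m"
    unfolding gram_det_def
  proof (rule sum.cong [OF refl])
    fix p assume "p \<in> {p. p permutes {..<m}}"
    then have "\<And>i. i < m \<Longrightarrow> p i < m"
      using permutes_in_image by fastforce
    then have "(\<Prod>i<m. gram_mat v m $$ (i,p i)) = (\<Prod>i<m. inner (v i) (v (p i)))"
      by (intro prod.cong) auto
    then show "of_int (sign p) * (\<Prod>i<m. gram_mat v m $$ (i,p i)) =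
        of_int (sign p) * (\<Prod>i<m. inner (v i) (v (p i)))"
      by simp
  qed
  finally show ?thesis by simp
qed

lemma gram_det_cong: "(\<And>i. i < m \<Longrightarrow> v i = w i) \<Longrightarrow> gram_det v m = gram_det w m"
  unfolding gram_det_eq_det_gram_mat by (rule arg_cong[where f = Determinant.det], rule eq_matI) auto

lemma gram_det_0 [simp]: "gram_det v 0 = 1"
  unfolding gram_det_eq_det_gram_mat by (rule det_dim_zero) simp

lemma gram_det_zero_vector:
  assumes "i < m" "v i = 0"
  shows "gram_det v m = 0"
  unfolding gram_det_def
proof (rule sum.neutral, rule ballI)
  fix p
  have "(\<Prod>j<m. inner (v j) (v (p j))) = 0"
    using assms by (intro prod_zero bexI[of _ i]) auto
  then show "of_int (sign p) * (\<Prod>j<m. inner (v j) (v (p j))) = 0" by simp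
qed

lemma gram_det_add_multiple:
  assumes "i < m" "j < m" "i \<noteq> j"
  shows "gram_det (v(j := v j + q *\<^sub>R v i)) m = gram_det v m"
proof -
  have "gram_mat (v(j := v j + q *\<^sub>R v i)) m = addcol q j i (addrow q j i (gram_mat v m))"
    by (rule eq_matI) (use assms in \<open>auto simp: inner_add inner_commute algebra_simps\<close>)
  then show ?thesis
    unfolding gram_det_eq_det_gram_mat using assms by (simp add: det_addrow)
qed

lemma gram_det_swap:
  assumes "i < m" "j < m"
  shows "gram_det (v \<circ> Transposition.transpose i j) m = gram_det v m"
proof (cases "i = j")
  case False
  have "gram_mat (v \<circ> Transposition.transpose i j) m = swapcols i j (swaprows i j (gram_mat v m))"
    by (rule eq_matI) (use assms in \<open>auto simp: transpose_def\<close>)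
  then show ?thesis
    unfolding gram_det_eq_det_gram_mat using assms False by (simp add: det_swaprows det_swapcols)
qed simp

lemma gram_det_Suc_orthogonal:
  assumes "\<And>i. i < m \<Longrightarrow> inner (v i) (v m) = 0"
  shows "gram_det v (Suc m) = gram_det v m * inner (v m) (v m)"
proof -
  let ?A = "gram_mat v (Suc m)"
  have "Determinant.det ?A = (\<Sum>i<Suc m. ?A $$ (i,m) * cofactor ?A i m)"
    by (rule laplace_expansion_column) auto
  also have "\<dots> = ?A $$ (m,m) * cofactor ?A m m"
    by (simp add: assms)
  also have "mat_delete ?A m m = gram_mat v m"
    by (rule eq_matI) (auto simp: mat_delete_def)
  then have "cofactor ?A m m = Determinant.det (gram_mat v m)"
    by (simp add: cofactor_def)
  finally show ?thesis by (simp add: gram_det_eq_det_gram_mat)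
qed

lemma gso_spec:
  fixes b :: "nat \<Rightarrow> 'a::euclidean_space"
  shows "b i - gso b i \<in> span (b ` {..<i})"
    and "x \<in> span (b ` {..<i}) \<Longrightarrow> inner (gso b i) x = 0"
proof -
  let ?S = "span (b ` {..<i})"
  let ?P = "\<lambda>y. b i - y \<in> ?S \<and> (\<forall>x\<in>?S. inner y x = 0)"
  obtain y z where "y \<in> ?S" "\<And>w. w \<in> ?S \<Longrightarrow> real_inner_class.orthogonal z w"
    "b i = y + z"
    using orthogonal_subspace_decomp_exists[of "b ` {..<i}" "b i"] by blast
  then have z: "?P z" by (auto simp: real_inner_class.orthogonal_def)
  have unique: "z' = z" if z': "?P z'" for z'
  proof -
    have "z' - z = (b i - z) - (b i - z')" by simp
    then have "z' - z \<in> ?S" using z z' by (metis span_diff)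
    then have "inner (z' - z) (z' - z) = 0"
      using z z' by (simp add: inner_diff_left)
    then show ?thesis by simp
  qed
  have "?P (gso b i)" unfolding gso_def by (rule theI[of ?P z, OF z unique])
  then show "b i - gso b i \<in> ?S" "x \<in> ?S \<Longrightarrow> inner (gso b i) x = 0" by auto
qed

lemma gram_det_add_span:
  fixes v :: "nat \<Rightarrow> 'a::euclidean_space"
  assumes "w \<in> span (v ` {..<m})"
  shows "gram_det (v(m := v m + w)) (Suc m) = gram_det v (Suc m)"
  using assms
proof (induction w rule: span_induct_alt)
  case (step q x y)
  then obtain i where i: "i < m" "x = v i" by auto
  let ?v = "v(m := v m + y)"
  have "v(m := v m + (q *\<^sub>R x + y)) = ?v(m := ?v m + q *\<^sub>R ?v i)"
    using i by (auto simp: algebra_simps)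
  then have "gram_det (v(m := v m + (q *\<^sub>R x + y))) (Suc m) = gram_det ?v (Suc m)"
    using i gram_det_add_multiple[of i "Suc m" m ?v q] by simp
  also have "\<dots> = gram_det v (Suc m)" using step by (simp add: fun_upd_def)
  finally show ?case .
qed simp

lemma gram_det_Suc:
  fixes v :: "nat \<Rightarrow> 'a::euclidean_space"
  shows "gram_det v (Suc m) = gram_det v m * (norm (gso v m))\<^sup>2"
proof -
  let ?v = "v(m := gso v m)"
  have "gso v m - v m \<in> span (v ` {..<m})"
    using span_neg[OF gso_spec(1)] by simp
  then have "gram_det v (Suc m) = gram_det ?v (Suc m)"
    using gram_det_add_span[of "gso v m - v m" v m] by simp
  also have "\<dots> = gram_det ?v m * inner (gso v m) (gso v m)"
  proof -
    have "inner (?v i) (?v m) = 0" if "i < m" for i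
      using that gso_spec(2)[of "v i" v m] by (simp add: inner_commute span_base)
    then show ?thesis using gram_det_Suc_orthogonal[of m ?v] by simp
  qed
  also have "gram_det ?v m = gram_det v m" by (rule gram_det_cong) simp
  finally show ?thesis by (simp add: power2_norm_eq_inner)
qed

lemma gram_det_nonzero:
  fixes c :: "nat \<Rightarrow> 'a::euclidean_space"
  shows "lin_indep_family c l \<Longrightarrow> gram_det c l \<noteq> 0"
proof (induction l)
  case (Suc s)
  have inj: "inj_on c {..<Suc s}" and ind: "independent (c ` {..<Suc s})"
    using Suc.prems by (auto simp: lin_indep_family_def)
  have "lin_indep_family c s"
    unfolding lin_indep_family_def
    using inj_on_subset[OF inj] independent_mono[OF ind] by (auto simp: image_mono)
  then have "gram_det c s \<noteq> 0" by (rule Suc.IH)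
  moreover have "c ` {..<Suc s} - {c s} = c ` {..<s}"
    using inj by (auto simp: inj_on_def less_Suc_eq)
  then have "c s \<notin> span (c ` {..<s})"
    using ind unfolding dependent_def by (metis image_eqI lessI lessThan_iff)
  then have "gso c s \<noteq> 0" using gso_spec(1)[of c s] by auto
  ultimately show ?case by (simp add: gram_det_Suc)
qed simp

lemma lattice_gen_0 [simp]: "lattice_gen b 0 = {0}"
  unfolding lattice_gen_def by simp

lemma lattice_gen_zero: "0 \<in> lattice_gen b m"
  unfolding lattice_gen_def by (auto intro: exI[of _ "\<lambda>_. 0"])

lemma lattice_gen_add:
  assumes "x \<in> lattice_gen b m" "y \<in> lattice_gen b m"
  shows "x + y \<in> lattice_gen b m"
proof -
  obtain zx zy where "x = (\<Sum>i<m. of_int (zx i) *\<^sub>R b i)" "y = (\<Sum>i<m. of_int (zy i) *\<^sub>R b i)"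
    using assms unfolding lattice_gen_def by blast
  then have "x + y = (\<Sum>i<m. of_int (zx i + zy i) *\<^sub>R b i)"
    by (simp add: sum.distrib scaleR_add_left)
  then show ?thesis unfolding lattice_gen_def by (metis (mono_tags) mem_Collect_eq)
qed

lemma lattice_gen_scale_int:
  assumes "x \<in> lattice_gen b m"
  shows "of_int q *\<^sub>R x \<in> lattice_gen b m"
proof -
  obtain z where "x = (\<Sum>i<m. of_int (z i) *\<^sub>R b i)"
    using assms unfolding lattice_gen_def by blast
  then have "of_int q *\<^sub>R x = (\<Sum>i<m. of_int (q * z i) *\<^sub>R b i)"
    by (simp add: scaleR_sum_right)
  then show ?thesis unfolding lattice_gen_def by (metis (mono_tags) mem_Collect_eq)
qed

lemma lattice_gen_generator:
  assumes "i < m"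
  shows "b i \<in> lattice_gen b m"
proof -
  have "(\<Sum>j<m. of_int (if j = i then 1 else 0) *\<^sub>R b j) = (\<Sum>j<m. if j = i then b j else 0)"
    by (rule sum.cong) auto
  also have "\<dots> = b i" using assms by (simp add: sum.delta')
  finally have "b i = (\<Sum>j<m. of_int (if j = i then 1 else 0) *\<^sub>R b j)" by simp
  then show ?thesis unfolding lattice_gen_def by (metis (mono_tags) mem_Collect_eq)
qed

lemma lattice_gen_subset:
  assumes "\<forall>i<m. v i \<in> lattice_gen b n"
  shows "lattice_gen v m \<subseteq> lattice_gen b n"
proof
  fix x assume "x \<in> lattice_gen v m"
  then obtain z where x: "x = (\<Sum>i<m. of_int (z i) *\<^sub>R v i)"
    unfolding lattice_gen_def by blast
  have "(\<Sum>i<m'. of_int (z i) *\<^sub>R v i) \<in> lattice_gen b n" if "m' \<le> m" for m'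
    using that
    by (induction m') (auto simp: lattice_gen_zero assms lattice_gen_add lattice_gen_scale_int)
  then show "x \<in> lattice_gen b n" using x by blast
qed

lemma lattice_gen_mono: "m \<le> m' \<Longrightarrow> lattice_gen b m \<subseteq> lattice_gen b m'"
  by (rule lattice_gen_subset) (auto intro: lattice_gen_generator)

lemma lattice_gen_subset_span: "lattice_gen b m \<subseteq> span (b ` {..<m})"
proof
  fix x assume "x \<in> lattice_gen b m"
  then obtain z where "x = (\<Sum>i<m. of_int (z i) *\<^sub>R b i)"
    unfolding lattice_gen_def by blast
  then show "x \<in> span (b ` {..<m})"
    by (metis (no_types, lifting) image_eqI lessThan_iff span_base span_scale span_sum)
qed

lemma lattice_gen_Suc_elim:
  assumes "x \<in> lattice_gen b (Suc m)"
  shows "\<exists>q::int. x - of_int q *\<^sub>R b m \<in> lattice_gen b m"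
proof -
  obtain z where "x = (\<Sum>i<Suc m. of_int (z i) *\<^sub>R b i)"
    using assms unfolding lattice_gen_def by blast
  then have "x - of_int (z m) *\<^sub>R b m = (\<Sum>i<m. of_int (z i) *\<^sub>R b i)" by simp
  then show ?thesis unfolding lattice_gen_def by blast
qed

lemma gram_det_euclid_step:
  fixes c :: "nat \<Rightarrow> 'a::euclidean_space" and z :: "nat \<Rightarrow> int"
  assumes coset: "\<forall>t<l. c t - of_int (z t) *\<^sub>R x \<in> lattice_gen b m"
    and ij: "i < l" "j < l" "i \<noteq> j" "z i \<noteq> 0" "\<bar>z i\<bar> \<le> \<bar>z j\<bar>"
  obtains c' z' where "gram_det c' l = gram_det c l"
    "\<forall>t<l. c' t - of_int (z' t) *\<^sub>R x \<in> lattice_gen b m"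
    "z' i = z i" "(\<Sum>t<l. nat \<bar>z' t\<bar>) < (\<Sum>t<l. nat \<bar>z t\<bar>)"
proof -
  define q :: int where "q = sgn (z i) * sgn (z j)"
  define c' where "c' = c(j := c j + (- of_int q) *\<^sub>R c i)"
  define z' where "z' = z(j := z j - q * z i)"
  have "\<bar>z j - q * z i\<bar> < \<bar>z j\<bar>"
    using ij unfolding q_def by (auto simp: sgn_if)
  then have "nat \<bar>z' j\<bar> < nat \<bar>z j\<bar>" by (simp add: z'_def)
  moreover have "(\<Sum>t<l. nat \<bar>w t\<bar>) = nat \<bar>w j\<bar> + (\<Sum>t\<in>{..<l}-{j}. nat \<bar>w t\<bar>)" for w :: "nat \<Rightarrow> int"
    by (rule sum.remove) (use ij in auto)
  moreover have "(\<Sum>t\<in>{..<l}-{j}. nat \<bar>z' t\<bar>) = (\<Sum>t\<in>{..<l}-{j}. nat \<bar>z t\<bar>)"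
    by (rule sum.cong) (auto simp: z'_def)
  ultimately have "(\<Sum>t<l. nat \<bar>z' t\<bar>) < (\<Sum>t<l. nat \<bar>z t\<bar>)"
    by (metis add_less_mono1)
  moreover have "gram_det c' l = gram_det c l"
    unfolding c'_def by (rule gram_det_add_multiple) (use ij in auto)
  moreover have "c' t - of_int (z' t) *\<^sub>R x \<in> lattice_gen b m" if "t < l" for t
  proof (cases "t = j")
    case True
    then have "c' t - of_int (z' t) *\<^sub>R x =
        (c j - of_int (z j) *\<^sub>R x) + of_int (- q) *\<^sub>R (c i - of_int (z i) *\<^sub>R x)"
      by (simp add: c'_def z'_def algebra_simps)
    then show ?thesis
      using coset ij by (simp add: lattice_gen_add lattice_gen_scale_int del: of_int_minus)
  qed (use coset that in \<open>simp add: c'_def z'_def\<close>)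
  moreover have "z' i = z i" using ij by (simp add: z'_def)
  ultimately show ?thesis using that by blast
qed

lemma gram_det_euclid_reduction:
  fixes c :: "nat \<Rightarrow> 'a::euclidean_space" and z :: "nat \<Rightarrow> int"
  assumes "\<forall>t<l. c t - of_int (z t) *\<^sub>R x \<in> lattice_gen b m" "\<exists>t<l. z t \<noteq> 0"
  shows "\<exists>c' z' r. r < l \<and> gram_det c' l = gram_det c l
    \<and> (\<forall>t<l. c' t - of_int (z' t) *\<^sub>R x \<in> lattice_gen b m)
    \<and> z' r \<noteq> 0 \<and> (\<forall>t<l. t \<noteq> r \<longrightarrow> z' t = 0)"
  using assms
proof (induction "\<Sum>t<l. nat \<bar>z t\<bar>" arbitrary: c z rule: less_induct)
  case less
  show ?case
  proof (cases "\<exists>i<l. \<exists>j<l. i \<noteq> j \<and> z i \<noteq> 0 \<and> z j \<noteq> 0")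
    case True
    then obtain i j where ij: "i < l" "j < l" "i \<noteq> j" "z i \<noteq> 0" "\<bar>z i\<bar> \<le> \<bar>z j\<bar>"
      by (metis linorder_le_cases)
    obtain c' z' where c': "gram_det c' l = gram_det c l"
      "\<forall>t<l. c' t - of_int (z' t) *\<^sub>R x \<in> lattice_gen b m"
      "z' i = z i" "(\<Sum>t<l. nat \<bar>z' t\<bar>) < (\<Sum>t<l. nat \<bar>z t\<bar>)"
      using gram_det_euclid_step[OF less.prems(1) ij] by blast
    then have "\<exists>t<l. z' t \<noteq> 0" using ij by metis
    then show ?thesis using less.hyps[OF c'(4) c'(2)] c'(1) by metis
  next
    case False
    then show ?thesis using less.prems by metis
  qed
qed

lemma lattice_gen_Suc_echelon:
  fixes c :: "nat \<Rightarrow> 'a::euclidean_space"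
  assumes "\<forall>j<Suc s. c j \<in> lattice_gen b (Suc m)" "\<exists>j<Suc s. c j \<notin> lattice_gen b m"
  obtains c' z where "gram_det c' (Suc s) = gram_det c (Suc s)" "\<forall>j<s. c' j \<in> lattice_gen b m"
    "c' s - of_int z *\<^sub>R b m \<in> lattice_gen b m" "z \<noteq> 0"
proof -
  have "\<forall>j<Suc s. \<exists>q::int. c j - of_int q *\<^sub>R b m \<in> lattice_gen b m"
    using assms(1) lattice_gen_Suc_elim by blast
  then obtain z where z: "\<forall>j<Suc s. c j - of_int (z j) *\<^sub>R b m \<in> lattice_gen b m"
    unfolding choice_iff' by blast
  then have "\<exists>j<Suc s. z j \<noteq> 0" using assms(2) by force
  then obtain c' z' r where r: "r < Suc s" "gram_det c' (Suc s) = gram_det c (Suc s)"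
    and cz': "\<forall>t<Suc s. c' t - of_int (z' t) *\<^sub>R b m \<in> lattice_gen b m"
    and z': "z' r \<noteq> 0" "\<forall>t<Suc s. t \<noteq> r \<longrightarrow> z' t = 0"
    using gram_det_euclid_reduction[OF z] by blast
  define c2 where "c2 = c' \<circ> Transposition.transpose r s"
  have "gram_det c2 (Suc s) = gram_det c (Suc s)"
    unfolding c2_def using r by (simp add: gram_det_swap)
  moreover have "c2 j \<in> lattice_gen b m" if "j < s" for j
  proof -
    let ?t = "Transposition.transpose r s j"
    have "?t < Suc s" "?t \<noteq> r" using that r(1) by (auto simp: Transposition.transpose_def)
    then show ?thesis using cz' z'(2) by (fastforce simp: c2_def)
  qed
  moreover have "c2 s - of_int (z' r) *\<^sub>R b m \<in> lattice_gen b m"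
    using cz' r(1) by (simp add: c2_def)
  ultimately show ?thesis using that z'(1) by blast
qed

lemma norm_gso_le_int_multiple_plus_span:
  fixes b :: "nat \<Rightarrow> 'a::euclidean_space"
  assumes "u \<in> span (b ` {..<m})" "g \<noteq> 0"
  shows "norm (gso b m) \<le> norm (of_int g *\<^sub>R gso b m + u)"
proof (rule power2_le_imp_le)
  have "1 \<le> (real_of_int g)\<^sup>2" using assms(2)
    by (metis abs_ge_zero abs_of_nonneg one_le_power power2_abs of_int_1_le_iff
        zero_less_abs_iff int_one_le_iff_zero_less of_int_abs)
  then have "(norm (gso b m))\<^sup>2 \<le> (real_of_int g)\<^sup>2 * (norm (gso b m))\<^sup>2 + (norm u)\<^sup>2"
    by (simp add: add_increasing2 mult_le_cancel_right1)
  also have "\<dots> = (norm (of_int g *\<^sub>R gso b m + u))\<^sup>2"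
    using gso_spec(2)[OF assms(1)] unfolding power2_norm_eq_inner
    by (simp add: inner_add inner_commute power2_eq_square algebra_simps)
  finally show "(norm (gso b m))\<^sup>2 \<le> (norm (of_int g *\<^sub>R gso b m + u))\<^sup>2" .
qed simp

lemma norm_gso_le_norm_gso_pivot:
  fixes b c :: "nat \<Rightarrow> 'a::euclidean_space"
  assumes "\<forall>j<s. c j \<in> lattice_gen b m" "c s - of_int z *\<^sub>R b m \<in> lattice_gen b m" "z \<noteq> 0"
  shows "norm (gso b m) \<le> norm (gso c s)"
proof -
  let ?B = "span (b ` {..<m})"
  have "c ` {..<s} \<subseteq> ?B" using assms(1) lattice_gen_subset_span by blast
  then have "span (c ` {..<s}) \<subseteq> ?B" by (simp add: span_minimal)
  then have "c s - gso c s \<in> ?B" using gso_spec(1) by blast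
  moreover have "c s - of_int z *\<^sub>R b m \<in> ?B" using assms(2) lattice_gen_subset_span by blast
  moreover have "of_int z *\<^sub>R (b m - gso b m) \<in> ?B" by (simp add: gso_spec(1) span_scale)
  ultimately have "(c s - of_int z *\<^sub>R b m) + of_int z *\<^sub>R (b m - gso b m) - (c s - gso c s) \<in> ?B"
    by (metis span_add span_diff)
  then have "norm (gso b m) \<le> norm (of_int z *\<^sub>R gso b m +
      ((c s - of_int z *\<^sub>R b m) + of_int z *\<^sub>R (b m - gso b m) - (c s - gso c s)))"
    using assms(3) by (rule norm_gso_le_int_multiple_plus_span)
  then show ?thesis by (simp add: algebra_simps)
qed

lemma gram_det_ge_prod_gso:
  fixes b c :: "nat \<Rightarrow> 'a::euclidean_space"
  assumes "\<forall>j<l. c j \<in> lattice_gen b n" "gram_det c l \<noteq> 0"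
  shows "\<exists>P\<subseteq>{..<n}. card P = l \<and> (\<Prod>i\<in>P. (norm (gso b i))\<^sup>2) \<le> gram_det c l
           \<and> (P \<subseteq> {..<k} \<longrightarrow> (\<forall>j<l. c j \<in> lattice_gen b k))"
  using assms
proof (induction n arbitrary: c l)
  case 0
  then have "l = 0" using gram_det_zero_vector[of 0 l c] by (cases l) auto
  then show ?case by (intro exI[of _ "{}"]) auto
next
  case (Suc m)
  show ?case
  proof (cases "\<forall>j<l. c j \<in> lattice_gen b m")
    case True
    then obtain P where "P \<subseteq> {..<m}" "card P = l" "(\<Prod>i\<in>P. (norm (gso b i))\<^sup>2) \<le> gram_det c l"
      "P \<subseteq> {..<k} \<longrightarrow> (\<forall>j<l. c j \<in> lattice_gen b k)"
      using Suc.IH[OF True Suc.prems(2)] by blast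
    then show ?thesis by (intro exI[of _ P]) auto
  next
    case False
    then obtain s where l: "l = Suc s" by (cases l) auto
    obtain c' z where c': "gram_det c' l = gram_det c l" "\<forall>j<s. c' j \<in> lattice_gen b m"
      "c' s - of_int z *\<^sub>R b m \<in> lattice_gen b m" "z \<noteq> 0"
      using lattice_gen_Suc_echelon[of s c b m] Suc.prems(1) False l by blast
    have split: "gram_det c l = gram_det c' s * (norm (gso c' s))\<^sup>2"
      using c'(1) l gram_det_Suc by metis
    then have "gram_det c' s \<noteq> 0" using Suc.prems(2) by auto
    then obtain P where P: "P \<subseteq> {..<m}" "card P = s"
      "(\<Prod>i\<in>P. (norm (gso b i))\<^sup>2) \<le> gram_det c' s"
      using Suc.IH[OF c'(2)] by blast
    have "norm (gso b m) \<le> norm (gso c' s)"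
      by (rule norm_gso_le_norm_gso_pivot[OF c'(2-4)])
    then have "(norm (gso b m))\<^sup>2 * (\<Prod>i\<in>P. (norm (gso b i))\<^sup>2) \<le> (norm (gso c' s))\<^sup>2 * gram_det c' s"
      using P(3) by (intro mult_mono power_mono) (auto intro: prod_nonneg)
    moreover have "finite P" "m \<notin> P" using P(1) finite_subset by auto
    ultimately have "(\<Prod>i\<in>insert m P. (norm (gso b i))\<^sup>2) \<le> gram_det c l"
      using split by (simp add: mult.commute)
    moreover have "card (insert m P) = l" using \<open>finite P\<close> \<open>m \<notin> P\<close> P(2) l by simp
    moreover have "\<forall>j<l. c j \<in> lattice_gen b k" if "insert m P \<subseteq> {..<k}"
      using that Suc.prems(1) lattice_gen_mono[of "Suc m" k b] by auto
    ultimately show ?thesis using P(1) by (intro exI[of _ "insert m P"]) auto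
  qed
qed

lemma prod_exchange_across_gap:
  fixes f :: "nat \<Rightarrow> real"
  assumes nonneg: "\<And>i. 0 \<le> f i"
    and gap: "\<And>i j. i < k \<Longrightarrow> k \<le> j \<Longrightarrow> j < n \<Longrightarrow> \<alpha> * f i \<le> f j"
    and P: "P \<subseteq> {..<n}" "card P \<le> k" and p: "p \<in> P" "k \<le> p"
  obtains S where "S \<subseteq> {..<n}" "card S = card P" "\<alpha> * (\<Prod>i\<in>S. f i) \<le> (\<Prod>i\<in>P. f i)"
proof -
  have fin: "finite P" using P(1) finite_subset by blast
  obtain i where i: "i < k" "i \<notin> P"
  proof (rule ccontr)
    assume "\<not> thesis"
    then have "insert p {..<k} \<subseteq> P" using that p by auto
    then have "card (insert p {..<k}) \<le> card P" using fin by (rule card_mono[rotated])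
    then show False using p(2) P(2) by simp
  qed
  let ?S = "insert i (P - {p})"
  have "p < n" using P(1) p(1) by auto
  then have "\<alpha> * f i * (\<Prod>j\<in>P - {p}. f j) \<le> f p * (\<Prod>j\<in>P - {p}. f j)"
    using gap[OF i(1) p(2)] by (intro mult_right_mono) (auto intro: prod_nonneg nonneg)
  then have "\<alpha> * (\<Prod>j\<in>?S. f j) \<le> (\<Prod>j\<in>P. f j)"
    using fin i(2) p(1) by (simp add: prod.remove mult.assoc)
  moreover have "?S \<subseteq> {..<n}" using P(1) i(1) p(2) \<open>p < n\<close> by auto
  moreover have "card ?S = card P" using fin i(2) card_Suc_Diff1[OF fin p(1)] by simp
  ultimately show ?thesis using that by blast
qed

lemma Min_prod_subsets_bounds:
  fixes f :: "nat \<Rightarrow> real"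
  assumes "\<And>i. 0 \<le> f i" "S \<subseteq> {..<n}"
  shows "0 \<le> Min ((\<lambda>T. \<Prod>i\<in>T. f i) ` {T. T \<subseteq> {..<n} \<and> card T = card S})"
    and "Min ((\<lambda>T. \<Prod>i\<in>T. f i) ` {T. T \<subseteq> {..<n} \<and> card T = card S}) \<le> (\<Prod>i\<in>S. f i)"
proof -
  let ?A = "(\<lambda>T. \<Prod>i\<in>T. f i) ` {T. T \<subseteq> {..<n} \<and> card T = card S}"
  have "finite ?A"
    by (rule finite_imageI, rule finite_subset[of _ "Pow {..<n}"]) auto
  moreover have "(\<Prod>i\<in>S. f i) \<in> ?A" using assms(2) by blast
  ultimately have "Min ?A \<in> ?A" "Min ?A \<le> (\<Prod>i\<in>S. f i)" by (auto intro: Min_in)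
  then show "0 \<le> Min ?A" "Min ?A \<le> (\<Prod>i\<in>S. f i)" using assms(1) by (auto simp: prod_nonneg)
qed

theorem mainTheorem15:
  fixes b :: "nat \<Rightarrow> real ^ 'd" and c :: "nat \<Rightarrow> real ^ 'd"
    and n k l :: nat and \<alpha> :: real
  assumes rat: "\<forall>i<n. \<forall>j. b i $ j \<in> \<rat>"
    and basis: "lin_indep_family b n"
    and k: "1 \<le> k" "k \<le> n"
    and alpha: "\<alpha> > sqrt (real n)"
    and gap: "\<forall>i j. i < k \<longrightarrow> k \<le> j \<longrightarrow> j < n \<longrightarrow> norm (gso b i) \<le> norm (gso b j) / \<alpha>"
    and subbasis: "lin_indep_family c l"
    and sub: "lattice_gen c l \<subseteq> lattice_gen b n"
    and l: "l \<le> k"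
    and det: "lattice_det c l < \<alpha> / sqrt (real n) *
               Min ((\<lambda>S. \<Prod>i\<in>S. norm (gso b i)) ` {S. S \<subseteq> {..<n} \<and> card S = l})"
  shows "lattice_gen c l \<subseteq> lattice_gen b k"
proof (rule ccontr)
  let ?N = "\<lambda>i. norm (gso b i)"
  let ?m = "Min ((\<lambda>S. \<Prod>i\<in>S. ?N i) ` {S. S \<subseteq> {..<n} \<and> card S = l})"
  assume "\<not> lattice_gen c l \<subseteq> lattice_gen b k"
  then have not_in: "\<not> (\<forall>j<l. c j \<in> lattice_gen b k)" using lattice_gen_subset by blast
  have "\<forall>j<l. c j \<in> lattice_gen b n" using sub lattice_gen_generator by blast
  from gram_det_ge_prod_gso[OF this gram_det_nonzero[OF subbasis], of k] obtain P
    where P: "P \<subseteq> {..<n}" "card P = l" "(\<Prod>i\<in>P. (?N i)\<^sup>2) \<le> gram_det c l"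
      "P \<subseteq> {..<k} \<longrightarrow> (\<forall>j<l. c j \<in> lattice_gen b k)"
    by blast
  have "\<not> P \<subseteq> {..<k}" using P(4) not_in by blast
  then obtain p where p: "p \<in> P" "k \<le> p" by (meson lessThan_iff not_le subsetI)
  have "\<alpha> > 0" using alpha by (meson le_less_trans real_sqrt_ge_zero of_nat_0_le_iff)
  then have "\<alpha> * ?N i \<le> ?N j" if "i < k" "k \<le> j" "j < n" for i j
    using gap that by (simp add: le_divide_eq mult.commute)
  then obtain S where S: "S \<subseteq> {..<n}" "card S = l"
    "\<alpha> * (\<Prod>i\<in>S. ?N i) \<le> (\<Prod>i\<in>P. ?N i)"
    by (rule prod_exchange_across_gap[OF norm_ge_zero _ P(1) _ p]) (use P(2) l in auto)
  note min_bounds = Min_prod_subsets_bounds[OF norm_ge_zero S(1), unfolded S(2)]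
  have "\<alpha> / sqrt (real n) \<le> \<alpha>"
    using k \<open>\<alpha> > 0\<close> by (simp add: divide_le_eq mult_le_cancel_left1)
  then have "\<alpha> / sqrt (real n) * ?m \<le> \<alpha> * ?m" using min_bounds(1) by (rule mult_right_mono)
  also have "\<dots> \<le> \<alpha> * (\<Prod>i\<in>S. ?N i)" using min_bounds(2) \<open>\<alpha> > 0\<close> by simp
  also have "\<dots> \<le> (\<Prod>i\<in>P. ?N i)" by (rule S(3))
  also have "\<dots> \<le> lattice_det c l"
    using P(3) unfolding lattice_det_def by (simp add: real_le_rsqrt prod_power_distrib)
  finally show False using det by simp
qed

end
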